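(* For every set $\Gamma\cup\{\varphi\}$ of formulas over $\Sigma^\circ$: if $\Gamma\vDash^{\mathsf{RN}}_{\mathcal{M}_{\bf mbCcl}}\varphi$ then $\Gamma\vdash_{\bf mbCcl}\varphi$.
   Context: $\Sigma^\circ$ has unary $\neg,\circ$ and binary $\wedge,\vee,\to$. ${\bf mbCcl}$ is the Hilbert calculus with Modus Ponens as only rule and axiom schemata: $\alpha\to(\beta\to\alpha)$; $(\alpha\to(\beta\to\gamma))\to((\alpha\to\beta)\to(\alpha\to\gamma))$; $\alpha\to(\beta\to(\alpha\wedge\beta))$; $(\alpha\wedge\beta)\to\alpha$; $(\alpha\wedge\beta)\to\beta$; $\alpha\to(\alpha\vee\beta)$; $\beta\to(\alpha\vee\beta)$; $(\alpha\to\gamma)\to((\beta\to\gamma)\to((\alpha\vee\beta)\to\gamma))$; $\alpha\vee\neg\alpha$; $\alpha\vee(\alpha\to\beta)$; $\circ\alpha\to(\alpha\to(\neg\alpha\to\beta))$; $\neg(\alpha\wedge\neg\alpha)\to\circ\alpha$. $\mathcal{A}_{\bf mbCcl}$ is the $\Sigma^\circ$-multialgebra with universe $\{F,t,T\}$, $D=\{t,T\}$, $U=\{F\}$: $x\tilde\vee y=U$ if $x=y=F$, else $D$; $x\tilde\wedge y=U$ if $F\in\{x,y\}$, else $D$; $\tilde\neg F=\tilde\neg t=D$, $\tilde\neg T=U$; $F\tilde\to y=D$, $x\tilde\to F=U$ for $x\in\{t,T\}$, $x\tilde\to y=D$ for $x,y\in\{t,T\}$; $\tilde\circ F=\tilde\circ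 T=D$, $\tilde\circ t=U$. A valuation is a map $\nu$ with $\nu(\#\alpha)\in\tilde\#\nu(\alpha)$ and $\nu(\alpha\#\beta)\in\nu(\alpha)\tilde\#\nu(\beta)$. $\mathcal{F}_{\bf mbCcl}$ is the set of valuations with $\nu(\alpha)=t\Rightarrow\nu(\alpha\wedge\neg\alpha)=T$ for all $\alpha$. $\Gamma\vDash^{\mathsf{RN}}_{\mathcal{M}_{\bf mbCcl}}\varphi$ iff every $\nu\in\mathcal{F}_{\bf mbCcl}$ with $\nu[\Gamma]\subseteq D$ has $\nu(\varphi)\in D$. *)

theory Defs
  imports Main
begin

datatype fm =
    Var nat
  | Neg fm
  | Circ fm
  | Conj fm fm
  | Disj fm fm
  | Imp fm fm

inductive mbCcl_axiom :: "fm \<Rightarrow> bool" where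
  ax1: "mbCcl_axiom (Imp a (Imp b a))"
| ax2: "mbCcl_axiom (Imp (Imp a (Imp b c)) (Imp (Imp a b) (Imp a c)))"
| ax3: "mbCcl_axiom (Imp a (Imp b (Conj a b)))"
| ax4: "mbCcl_axiom (Imp (Conj a b) a)"
| ax5: "mbCcl_axiom (Imp (Conj a b) b)"
| ax6: "mbCcl_axiom (Imp a (Disj a b))"
| ax7: "mbCcl_axiom (Imp b (Disj a b))"
| ax8: "mbCcl_axiom (Imp (Imp a c) (Imp (Imp b c) (Imp (Disj a b) c)))"
| ax9: "mbCcl_axiom (Disj a (Neg a))"
| ax10: "mbCcl_axiom (Disj a (Imp a b))"
| ax11: "mbCcl_axiom (Imp (Circ a) (Imp a (Imp (Neg a) b)))"
| ax12: "mbCcl_axiom (Imp (Neg (Conj a (Neg a))) (Circ a))"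

inductive mbCcl_derives :: "fm set \<Rightarrow> fm \<Rightarrow> bool" where
  prem: "\<phi> \<in> \<Gamma> \<Longrightarrow> mbCcl_derives \<Gamma> \<phi>"
| axiom: "mbCcl_axiom \<phi> \<Longrightarrow> mbCcl_derives \<Gamma> \<phi>"
| mp: "mbCcl_derives \<Gamma> \<alpha> \<Longrightarrow> mbCcl_derives \<Gamma> (Imp \<alpha> \<beta>) \<Longrightarrow> mbCcl_derives \<Gamma> \<beta>"

datatype tv = vF | vt | vT

definition Dset :: "tv set" where "Dset = {vt, vT}"
definition Uset :: "tv set" where "Uset = {vF}"

definition mor :: "tv \<Rightarrow> tv \<Rightarrow> tv set" where
  "mor x y = (if x = vF \<and> y = vF then Uset else Dset)"
definition mand :: "tv \<Rightarrow> tv \<Rightarrow> tv set" where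
  "mand x y = (if vF \<in> {x, y} then Uset else Dset)"
definition mneg :: "tv \<Rightarrow> tv set" where
  "mneg x = (if x = vT then Uset else Dset)"
definition mimp :: "tv \<Rightarrow> tv \<Rightarrow> tv set" where
  "mimp x y = (if x = vF then Dset else if y = vF then Uset else Dset)"
definition mcirc :: "tv \<Rightarrow> tv set" where
  "mcirc x = (if x = vt then Uset else Dset)"

definition valuation :: "(fm \<Rightarrow> tv) \<Rightarrow> bool" where
  "valuation v \<longleftrightarrow>
     (\<forall>a. v (Neg a) \<in> mneg (v a)) \<and>
     (\<forall>a. v (Circ a) \<in> mcirc (v a)) \<and>
     (\<forall>a b. v (Conj a b) \<in> mand (v a) (v b)) \<and>
     (\<forall>a b. v (Disj a b) \<in> mor (v a) (v b)) \<and>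
     (\<forall>a b. v (Imp a b) \<in> mimp (v a) (v b))"

definition F_mbCcl :: "(fm \<Rightarrow> tv) set" where
  "F_mbCcl = {v. valuation v \<and> (\<forall>a. v a = vt \<longrightarrow> v (Conj a (Neg a)) = vT)}"

definition RN_consequence :: "fm set \<Rightarrow> fm \<Rightarrow> bool" where
  "RN_consequence \<Gamma> \<phi> \<longleftrightarrow>
     (\<forall>v \<in> F_mbCcl. v ` \<Gamma> \<subseteq> Dset \<longrightarrow> v \<phi> \<in> Dset)"

end

theory Submission
  imports Defs
begin

text \<open>
  Completeness via a canonical valuation. If \<open>\<Gamma> \<turnstile> \<phi>\<close> fails, Lindenbaum's lemma extends
  \<open>\<Gamma>\<close> to a set \<open>\<Delta>\<close> that is maximal among those not deriving \<open>\<phi>\<close>. Such a set is a closed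
  theory that behaves classically on \<open>\<and>\<close>, \<open>\<or>\<close>, \<open>\<rightarrow>\<close> and contains \<open>\<alpha>\<close> or \<open>\<not>\<alpha>\<close> for every \<open>\<alpha>\<close>.
  Evaluate \<open>\<alpha>\<close> to \<open>F\<close> if \<open>\<alpha> \<notin> \<Delta>\<close>, to \<open>t\<close> if both \<open>\<alpha>, \<not>\<alpha> \<in> \<Delta>\<close>, and to \<open>T\<close> otherwise.
  The axioms for \<open>\<circ>\<close> make this a valuation of the multialgebra, and since \<open>\<not>(\<alpha> \<and> \<not>\<alpha>)\<close>
  would force \<open>\<circ>\<alpha>\<close> and hence explosion, a value \<open>t\<close> for \<open>\<alpha>\<close> gives \<open>\<alpha> \<and> \<not>\<alpha>\<close> the value \<open>T\<close>:
  the valuation lies in \<open>F_mbCcl\<close>, satisfies \<open>\<Gamma>\<close>, and refutes \<open>\<phi>\<close>.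
\<close>

abbreviation derives (infix "\<turnstile>" 50) where "\<Gamma> \<turnstile> \<alpha> \<equiv> mbCcl_derives \<Gamma> \<alpha>"

lemmas derives_axiomI = mbCcl_axiom.intros[THEN mbCcl_derives.axiom]

lemma derives_mono: "\<Gamma> \<turnstile> \<alpha> \<Longrightarrow> \<Gamma> \<subseteq> \<Delta> \<Longrightarrow> \<Delta> \<turnstile> \<alpha>"
  by (induction rule: mbCcl_derives.induct) (auto intro: mbCcl_derives.intros)

lemma derives_finite_premises: "\<Gamma> \<turnstile> \<alpha> \<Longrightarrow> \<exists>\<Phi>. finite \<Phi> \<and> \<Phi> \<subseteq> \<Gamma> \<and> \<Phi> \<turnstile> \<alpha>"
proof (induction rule: mbCcl_derives.induct)
  case (prem \<phi> \<Gamma>)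
  then show ?case by (intro exI[of _ "{\<phi>}"]) (auto intro: mbCcl_derives.prem)
next
  case (axiom \<phi> \<Gamma>)
  then show ?case by (intro exI[of _ "{}"]) (auto intro: mbCcl_derives.axiom)
next
  case (mp \<Gamma> \<alpha> \<beta>)
  then obtain \<Phi>\<^sub>1 \<Phi>\<^sub>2 where "finite \<Phi>\<^sub>1" "\<Phi>\<^sub>1 \<subseteq> \<Gamma>" "\<Phi>\<^sub>1 \<turnstile> \<alpha>" "finite \<Phi>\<^sub>2" "\<Phi>\<^sub>2 \<subseteq> \<Gamma>" "\<Phi>\<^sub>2 \<turnstile> Imp \<alpha> \<beta>"
    by blast
  then show ?case
    by (intro exI[of _ "\<Phi>\<^sub>1 \<union> \<Phi>\<^sub>2"]) (auto intro: mbCcl_derives.mp derives_mono)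
qed

lemma derives_imp_refl: "\<Gamma> \<turnstile> Imp \<alpha> \<alpha>"
proof -
  have "\<Gamma> \<turnstile> Imp (Imp \<alpha> (Imp (Imp \<alpha> \<alpha>) \<alpha>)) (Imp (Imp \<alpha> (Imp \<alpha> \<alpha>)) (Imp \<alpha> \<alpha>))"
    by (rule derives_axiomI)
  then have "\<Gamma> \<turnstile> Imp (Imp \<alpha> (Imp \<alpha> \<alpha>)) (Imp \<alpha> \<alpha>)"
    by (rule mbCcl_derives.mp[OF derives_axiomI(1)])
  then show ?thesis by (rule mbCcl_derives.mp[OF derives_axiomI(1)])
qed

lemma deduction_theorem:
  assumes "insert \<alpha> \<Gamma> \<turnstile> \<beta>"
  shows "\<Gamma> \<turnstile> Imp \<alpha> \<beta>"
  using assms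
proof (induction "insert \<alpha> \<Gamma>" \<beta> rule: mbCcl_derives.induct)
  case (prem \<phi>)
  show ?case
  proof (cases "\<phi> = \<alpha>")
    case True
    then show ?thesis by (simp add: derives_imp_refl)
  next
    case False
    with prem have "\<Gamma> \<turnstile> \<phi>" by (auto intro: mbCcl_derives.prem)
    then show ?thesis by (rule mbCcl_derives.mp[OF _ derives_axiomI(1)])
  qed
next
  case (axiom \<phi>)
  then show ?case by (intro mbCcl_derives.mp[OF mbCcl_derives.axiom derives_axiomI(1)])
next
  case (mp \<phi> \<psi>)
  have "\<Gamma> \<turnstile> Imp (Imp \<alpha> \<phi>) (Imp \<alpha> \<psi>)"
    by (rule mbCcl_derives.mp[OF mp.hyps(4) derives_axiomI(2)])
  then show ?case by (rule mbCcl_derives.mp[OF mp.hyps(2)])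
qed

definition maximal_nonderiving :: "fm set \<Rightarrow> fm \<Rightarrow> bool" where
  "maximal_nonderiving \<Delta> \<phi> \<longleftrightarrow> \<not> \<Delta> \<turnstile> \<phi> \<and> (\<forall>\<Delta>'. \<Delta> \<subseteq> \<Delta>' \<longrightarrow> \<not> \<Delta>' \<turnstile> \<phi> \<longrightarrow> \<Delta>' = \<Delta>)"

lemma lindenbaum:
  assumes "\<not> \<Gamma> \<turnstile> \<phi>"
  obtains \<Delta> where "\<Gamma> \<subseteq> \<Delta>" "maximal_nonderiving \<Delta> \<phi>"
proof -
  let ?S = "{\<Delta>. \<Gamma> \<subseteq> \<Delta> \<and> \<not> \<Delta> \<turnstile> \<phi>}"
  have "\<exists>\<Delta>\<in>?S. \<forall>\<Delta>'\<in>?S. \<Delta> \<subseteq> \<Delta>' \<longrightarrow> \<Delta>' = \<Delta>"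
  proof (rule subset_Zorn_nonempty)
    show "?S \<noteq> {}" using assms by blast
  next
    fix \<C> assume \<C>: "\<C> \<noteq> {}" "subset.chain ?S \<C>"
    have "\<not> \<Union>\<C> \<turnstile> \<phi>"
    proof
      assume "\<Union>\<C> \<turnstile> \<phi>"
      then obtain \<Phi> where \<Phi>: "finite \<Phi>" "\<Phi> \<subseteq> \<Union>\<C>" "\<Phi> \<turnstile> \<phi>"
        using derives_finite_premises by blast
      then obtain \<Delta> where "\<Delta> \<in> \<C>" "\<Phi> \<subseteq> \<Delta>"
        using finite_subset_Union_chain[OF \<Phi>(1,2) \<C>] by blast
      moreover from \<open>\<Delta> \<in> \<C>\<close> \<C>(2) have "\<not> \<Delta> \<turnstile> \<phi>"
        unfolding subset.chain_def by blast
      ultimately show False using \<Phi>(3) derives_mono by blast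
    qed
    moreover have "\<Gamma> \<subseteq> \<Union>\<C>" using \<C> unfolding subset.chain_def by blast
    ultimately show "\<Union>\<C> \<in> ?S" by blast
  qed
  then obtain \<Delta> where "\<Delta> \<in> ?S" "\<forall>\<Delta>'\<in>?S. \<Delta> \<subseteq> \<Delta>' \<longrightarrow> \<Delta>' = \<Delta>"
    by blast
  then show ?thesis
    using that unfolding maximal_nonderiving_def by (metis (no_types, lifting) mem_Collect_eq order_trans)
qed

definition canonical_valuation :: "fm set \<Rightarrow> fm \<Rightarrow> tv" where
  "canonical_valuation \<Delta> \<alpha> = (if \<alpha> \<notin> \<Delta> then vF else if Neg \<alpha> \<in> \<Delta> then vt else vT)"

lemma canonical_valuation_designated: "canonical_valuation \<Delta> \<alpha> \<in> Dset \<longleftrightarrow> \<alpha> \<in> \<Delta>"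
  unfolding canonical_valuation_def Dset_def by auto

context
  fixes \<Delta> :: "fm set" and \<phi> :: fm
  assumes maximal: "maximal_nonderiving \<Delta> \<phi>"
begin

lemma maximal_not_derives: "\<not> \<Delta> \<turnstile> \<phi>"
  using maximal unfolding maximal_nonderiving_def by blast

lemma maximal_notin_imp: "\<alpha> \<notin> \<Delta> \<Longrightarrow> \<Delta> \<turnstile> Imp \<alpha> \<phi>"
  using maximal unfolding maximal_nonderiving_def
  by (metis deduction_theorem insertI1 subset_insertI)

lemma maximal_derives_iff_mem: "\<Delta> \<turnstile> \<alpha> \<longleftrightarrow> \<alpha> \<in> \<Delta>"
  using maximal_notin_imp maximal_not_derives mbCcl_derives.mp mbCcl_derives.prem by metis

lemma maximal_mp: "Imp \<alpha> \<beta> \<in> \<Delta> \<Longrightarrow> \<alpha> \<in> \<Delta> \<Longrightarrow> \<beta> \<in> \<Delta>"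
  unfolding maximal_derives_iff_mem[symmetric] by (rule mbCcl_derives.mp)

lemma maximal_axiom: "mbCcl_axiom \<alpha> \<Longrightarrow> \<alpha> \<in> \<Delta>"
  unfolding maximal_derives_iff_mem[symmetric] by (rule mbCcl_derives.axiom)

lemmas maximal_axiomI = mbCcl_axiom.intros[THEN maximal_axiom]

lemma maximal_Conj: "Conj \<alpha> \<beta> \<in> \<Delta> \<longleftrightarrow> \<alpha> \<in> \<Delta> \<and> \<beta> \<in> \<Delta>"
  using maximal_mp[OF maximal_axiomI(4)] maximal_mp[OF maximal_axiomI(5)]
    maximal_mp[OF maximal_mp[OF maximal_axiomI(3)]]
  by blast

lemma maximal_Disj: "Disj \<alpha> \<beta> \<in> \<Delta> \<longleftrightarrow> \<alpha> \<in> \<Delta> \<or> \<beta> \<in> \<Delta>"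
proof
  assume "Disj \<alpha> \<beta> \<in> \<Delta>"
  show "\<alpha> \<in> \<Delta> \<or> \<beta> \<in> \<Delta>"
  proof (rule ccontr)
    assume "\<not> (\<alpha> \<in> \<Delta> \<or> \<beta> \<in> \<Delta>)"
    then have "Imp \<alpha> \<phi> \<in> \<Delta>" "Imp \<beta> \<phi> \<in> \<Delta>"
      using maximal_notin_imp maximal_derives_iff_mem by blast+
    then have "\<phi> \<in> \<Delta>"
      using maximal_mp[OF maximal_mp[OF maximal_mp[OF maximal_axiomI(8)]]] \<open>Disj \<alpha> \<beta> \<in> \<Delta>\<close>
      by blast
    then show False
      using maximal_not_derives maximal_derives_iff_mem by blast
  qed
next
  show "\<alpha> \<in> \<Delta> \<or> \<beta> \<in> \<Delta> \<Longrightarrow> Disj \<alpha> \<beta> \<in> \<Delta>"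
    using maximal_mp[OF maximal_axiomI(6)] maximal_mp[OF maximal_axiomI(7)] by blast
qed

lemma maximal_Imp: "Imp \<alpha> \<beta> \<in> \<Delta> \<longleftrightarrow> \<alpha> \<notin> \<Delta> \<or> \<beta> \<in> \<Delta>"
  using maximal_axiomI(10)[of \<alpha> \<beta>] maximal_Disj maximal_mp maximal_mp[OF maximal_axiomI(1)]
  by blast

lemma maximal_Neg: "\<alpha> \<notin> \<Delta> \<Longrightarrow> Neg \<alpha> \<in> \<Delta>"
  using maximal_axiomI(9)[of \<alpha>] maximal_Disj by blast

lemma maximal_Circ_explosive: "\<alpha> \<in> \<Delta> \<Longrightarrow> Neg \<alpha> \<in> \<Delta> \<Longrightarrow> Circ \<alpha> \<notin> \<Delta>"
  using maximal_mp[OF maximal_mp[OF maximal_mp[OF maximal_axiomI(11)[of \<alpha> \<phi>]]]]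
    maximal_not_derives maximal_derives_iff_mem
  by blast

lemma maximal_Circ: "Neg (Conj \<alpha> (Neg \<alpha>)) \<in> \<Delta> \<Longrightarrow> Circ \<alpha> \<in> \<Delta>"
  by (rule maximal_mp[OF maximal_axiomI(12)])

lemma valuation_canonical_valuation: "valuation (canonical_valuation \<Delta>)"
  unfolding valuation_def
proof (intro conjI allI)
  fix \<alpha> \<beta>
  note defs = canonical_valuation_def mneg_def mcirc_def mand_def mor_def mimp_def Dset_def Uset_def
  show "canonical_valuation \<Delta> (Neg \<alpha>) \<in> mneg (canonical_valuation \<Delta> \<alpha>)"
    using maximal_Neg by (auto simp: defs)
  have "\<alpha> \<notin> \<Delta> \<or> Neg \<alpha> \<notin> \<Delta> \<Longrightarrow> Circ \<alpha> \<in> \<Delta>"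
    using maximal_Circ maximal_Neg maximal_Conj by blast
  then show "canonical_valuation \<Delta> (Circ \<alpha>) \<in> mcirc (canonical_valuation \<Delta> \<alpha>)"
    using maximal_Circ_explosive by (auto simp: defs)
  show "canonical_valuation \<Delta> (Conj \<alpha> \<beta>) \<in> mand (canonical_valuation \<Delta> \<alpha>) (canonical_valuation \<Delta> \<beta>)"
    using maximal_Conj by (auto simp: defs)
  show "canonical_valuation \<Delta> (Disj \<alpha> \<beta>) \<in> mor (canonical_valuation \<Delta> \<alpha>) (canonical_valuation \<Delta> \<beta>)"
    using maximal_Disj by (auto simp: defs)
  show "canonical_valuation \<Delta> (Imp \<alpha> \<beta>) \<in> mimp (canonical_valuation \<Delta> \<alpha>) (canonical_valuation \<Delta> \<beta>)"
    using maximal_Imp by (auto simp: defs)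
qed

lemma canonical_valuation_contradiction:
  assumes "canonical_valuation \<Delta> \<alpha> = vt"
  shows "canonical_valuation \<Delta> (Conj \<alpha> (Neg \<alpha>)) = vT"
proof -
  have "\<alpha> \<in> \<Delta>" "Neg \<alpha> \<in> \<Delta>"
    using assms unfolding canonical_valuation_def by (auto split: if_splits)
  then have "Conj \<alpha> (Neg \<alpha>) \<in> \<Delta>" "Neg (Conj \<alpha> (Neg \<alpha>)) \<notin> \<Delta>"
    using maximal_Conj maximal_Circ maximal_Circ_explosive
    by blast+
  then show ?thesis unfolding canonical_valuation_def by simp
qed

lemma canonical_valuation_in_F_mbCcl: "canonical_valuation \<Delta> \<in> F_mbCcl"
  unfolding F_mbCcl_def
  using valuation_canonical_valuation canonical_valuation_contradiction by blast

end

theorem mainTheorem4: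
  fixes \<Gamma> :: "fm set" and \<phi> :: fm
  assumes "RN_consequence \<Gamma> \<phi>"
  shows "mbCcl_derives \<Gamma> \<phi>"
proof (rule ccontr)
  assume "\<not> \<Gamma> \<turnstile> \<phi>"
  then obtain \<Delta> where \<Delta>: "\<Gamma> \<subseteq> \<Delta>" "maximal_nonderiving \<Delta> \<phi>"
    by (rule lindenbaum)
  have "canonical_valuation \<Delta> ` \<Gamma> \<subseteq> Dset"
    using \<Delta>(1) canonical_valuation_designated by blast
  moreover have "canonical_valuation \<Delta> \<phi> \<notin> Dset"
    using maximal_not_derives[OF \<Delta>(2)] maximal_derives_iff_mem[OF \<Delta>(2)]
    by (simp add: canonical_valuation_designated)
  ultimately show False
    using assms canonical_valuation_in_F_mbCcl[OF \<Delta>(2)] unfolding RN_consequence_def by blast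
qed

end
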